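(* Let $A$ be an associative unital algebra and $(H,\pi_l,\pi_r,\psi_l,\psi_r)$ an L-R-twisting datum for $A$. Then $A$ with the product $a\bullet b=(a_{[0]}\cdot b_{<1>})(a_{[-1]}\cdot b_{<0>})$ and the original unit $1$ is an associative unital algebra.
   Context: Work over a field $k$; $H$ an ordinary bialgebra, $\Delta(h)=h_1\otimes h_2$. An L-R-twisting datum for an algebra $A$ is a bialgebra $H$ together with: (i) an $H$-bimodule algebra structure on $A$, i.e. actions $\pi_l(h\otimes a)=h\cdot a$, $\pi_r(a\otimes h)=a\cdot h$ making $A$ an $H$-bimodule with $h\cdot(ab)=(h_1\cdot a)(h_2\cdot b)$, $(ab)\cdot h=(a\cdot h_1)(b\cdot h_2)$, $h\cdot1=1\cdot h=\varepsilon(h)1$; (ii) an $H$-bicomodule algebra structure on $A$, i.e. algebra maps $\psi_l(a)=a_{[-1]}\otimes a_{[0]}$, $\psi_r(a)=a_{<0>}\otimes a_{<1>}$ making $A$ an $H$-bicomodule; (iii) for all $h\in H$, $a\in A$: $(h\cdot a)_{[-1]}\otimes(h\cdot a)_{[0]}=a_{[-1]}\otimes h\cdot a_{[0]}$, $(h\cdot a)_{<0>}\otimes(h\cdot a)_{<1>}=h\cdot a_{<0>}\otimes a_{<1>}$, $(a\cdot h)_{[-1]}\otimes(a\cdot h)_{[0]}=a_{[-1]}\otimes a_{[0]}\cdot h$, $(a\cdot h)_{<0>}\otimes(a\cdot h)_{<1>}=a_{<0>}\cdot h\otimes a_{<1>}$. *)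

theory Defs
  imports Main "HOL.Vector_Spaces"
begin

text \<open>An element of a tensor product V (x) W of k-vector spaces is represented by a
finite list of pairs, standing for the finite sum of the simple tensors v (x) w.
Two representations denote the same tensor iff they agree under every k-bilinear
form (over a field, bilinear forms separate the points of V (x) W).  Similarly for
threefold tensor products with trilinear forms.  Sweedler sums are sums over the
corresponding list.\<close>

definition bilin ::
  "('k::field \<Rightarrow> 'v::ab_group_add \<Rightarrow> 'v) \<Rightarrow> ('k \<Rightarrow> 'w::ab_group_add \<Rightarrow> 'w)
   \<Rightarrow> ('v \<Rightarrow> 'w \<Rightarrow> 'k) \<Rightarrow> bool" where
  "bilin sV sW f \<longleftrightarrow>
     (\<forall>v. Vector_Spaces.linear sW times (f v)) \<and>
     (\<forall>w. Vector_Spaces.linear sV times (\<lambda>v. f v w))"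

definition trilin ::
  "('k::field \<Rightarrow> 'u::ab_group_add \<Rightarrow> 'u) \<Rightarrow> ('k \<Rightarrow> 'v::ab_group_add \<Rightarrow> 'v)
   \<Rightarrow> ('k \<Rightarrow> 'w::ab_group_add \<Rightarrow> 'w) \<Rightarrow> ('u \<Rightarrow> 'v \<Rightarrow> 'w \<Rightarrow> 'k) \<Rightarrow> bool" where
  "trilin sU sV sW f \<longleftrightarrow>
     (\<forall>v w. Vector_Spaces.linear sU times (\<lambda>u. f u v w)) \<and>
     (\<forall>u w. Vector_Spaces.linear sV times (\<lambda>v. f u v w)) \<and>
     (\<forall>u v. Vector_Spaces.linear sW times (\<lambda>w. f u v w))"

definition teq2 ::
  "('k::field \<Rightarrow> 'v::ab_group_add \<Rightarrow> 'v) \<Rightarrow> ('k \<Rightarrow> 'w::ab_group_add \<Rightarrow> 'w)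
   \<Rightarrow> ('v \<times> 'w) list \<Rightarrow> ('v \<times> 'w) list \<Rightarrow> bool" where
  "teq2 sV sW xs ys \<longleftrightarrow>
     (\<forall>f. bilin sV sW f \<longrightarrow>
        sum_list (map (\<lambda>(v, w). f v w) xs) = sum_list (map (\<lambda>(v, w). f v w) ys))"

definition teq3 ::
  "('k::field \<Rightarrow> 'u::ab_group_add \<Rightarrow> 'u) \<Rightarrow> ('k \<Rightarrow> 'v::ab_group_add \<Rightarrow> 'v)
   \<Rightarrow> ('k \<Rightarrow> 'w::ab_group_add \<Rightarrow> 'w)
   \<Rightarrow> ('u \<times> 'v \<times> 'w) list \<Rightarrow> ('u \<times> 'v \<times> 'w) list \<Rightarrow> bool" where
  "teq3 sU sV sW xs ys \<longleftrightarrow>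
     (\<forall>f. trilin sU sV sW f \<longrightarrow>
        sum_list (map (\<lambda>(u, v, w). f u v w) xs) = sum_list (map (\<lambda>(u, v, w). f u v w) ys))"

definition tmul :: "('b::times \<times> 'c::times) list \<Rightarrow> ('b \<times> 'c) list \<Rightarrow> ('b \<times> 'c) list" where
  "tmul xs ys = concat (map (\<lambda>(x, y). map (\<lambda>(x', y'). (x * x', y * y')) ys) xs)"

text \<open>f (x) id and id (x) f applied to a represented tensor.\<close>
definition tmap_l :: "('a \<Rightarrow> ('b \<times> 'c) list) \<Rightarrow> ('a \<times> 'd) list \<Rightarrow> ('b \<times> 'c \<times> 'd) list" where
  "tmap_l f xs = concat (map (\<lambda>(x, y). map (\<lambda>(x1, x2). (x1, x2, y)) (f x)) xs)"

definition tmap_r :: "('d \<Rightarrow> ('b \<times> 'c) list) \<Rightarrow> ('a \<times> 'd) list \<Rightarrow> ('a \<times> 'b \<times> 'c) list" where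
  "tmap_r f xs = concat (map (\<lambda>(x, y). map (\<lambda>(y1, y2). (x, y1, y2)) (f y)) xs)"

definition k_algebra :: "('k::field \<Rightarrow> 'a::ring_1 \<Rightarrow> 'a) \<Rightarrow> bool" where
  "k_algebra s \<longleftrightarrow> vector_space s \<and>
     (\<forall>c x y. s c (x * y) = s c x * y \<and> s c (x * y) = x * s c y)"

definition tlinear ::
  "('k::field \<Rightarrow> 'a::ab_group_add \<Rightarrow> 'a) \<Rightarrow> ('k \<Rightarrow> 'v::ab_group_add \<Rightarrow> 'v)
   \<Rightarrow> ('k \<Rightarrow> 'w::ab_group_add \<Rightarrow> 'w) \<Rightarrow> ('a \<Rightarrow> ('v \<times> 'w) list) \<Rightarrow> bool" where
  "tlinear sA sV sW f \<longleftrightarrow>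
     (\<forall>x y. teq2 sV sW (f (x + y)) (f x @ f y)) \<and>
     (\<forall>c x. teq2 sV sW (f (sA c x)) (map (\<lambda>(v, w). (sV c v, w)) (f x)))"

definition bialgebra ::
  "('k::field \<Rightarrow> 'h::ring_1 \<Rightarrow> 'h) \<Rightarrow> ('h \<Rightarrow> ('h \<times> 'h) list) \<Rightarrow> ('h \<Rightarrow> 'k) \<Rightarrow> bool" where
  "bialgebra sH \<Delta> \<epsilon> \<longleftrightarrow>
     k_algebra sH \<and>
     tlinear sH sH sH \<Delta> \<and>
     Vector_Spaces.linear sH times \<epsilon> \<and>
     (\<forall>h. teq3 sH sH sH (tmap_l \<Delta> (\<Delta> h)) (tmap_r \<Delta> (\<Delta> h))) \<and>
     (\<forall>h. sum_list (map (\<lambda>(x, y). sH (\<epsilon> x) y) (\<Delta> h)) = h) \<and>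
     (\<forall>h. sum_list (map (\<lambda>(x, y). sH (\<epsilon> y) x) (\<Delta> h)) = h) \<and>
     (\<forall>g h. teq2 sH sH (\<Delta> (g * h)) (tmul (\<Delta> g) (\<Delta> h))) \<and>
     teq2 sH sH (\<Delta> 1) [(1, 1)] \<and>
     (\<forall>g h. \<epsilon> (g * h) = \<epsilon> g * \<epsilon> h) \<and>
     \<epsilon> 1 = 1"

definition bimodule_algebra ::
  "('k::field \<Rightarrow> 'h::ring_1 \<Rightarrow> 'h) \<Rightarrow> ('h \<Rightarrow> ('h \<times> 'h) list) \<Rightarrow> ('h \<Rightarrow> 'k)
   \<Rightarrow> ('k \<Rightarrow> 'a::ring_1 \<Rightarrow> 'a) \<Rightarrow> ('h \<Rightarrow> 'a \<Rightarrow> 'a) \<Rightarrow> ('a \<Rightarrow> 'h \<Rightarrow> 'a) \<Rightarrow> bool" where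
  "bimodule_algebra sH \<Delta> \<epsilon> sA pl pr \<longleftrightarrow>
     \<comment> \<open>k-bilinearity of the actions\<close>
     (\<forall>h. Vector_Spaces.linear sA sA (pl h)) \<and>
     (\<forall>a. Vector_Spaces.linear sH sA (\<lambda>h. pl h a)) \<and>
     (\<forall>h. Vector_Spaces.linear sA sA (\<lambda>a. pr a h)) \<and>
     (\<forall>a. Vector_Spaces.linear sH sA (pr a)) \<and>
     \<comment> \<open>left module, right module, bimodule\<close>
     (\<forall>g h a. pl (g * h) a = pl g (pl h a)) \<and>
     (\<forall>a. pl 1 a = a) \<and>
     (\<forall>g h a. pr a (g * h) = pr (pr a g) h) \<and>
     (\<forall>a. pr a 1 = a) \<and>
     (\<forall>g h a. pr (pl h a) g = pl h (pr a g)) \<and>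
     \<comment> \<open>module algebra conditions\<close>
     (\<forall>h a b. pl h (a * b) = sum_list (map (\<lambda>(h1, h2). pl h1 a * pl h2 b) (\<Delta> h))) \<and>
     (\<forall>h a b. pr (a * b) h = sum_list (map (\<lambda>(h1, h2). pr a h1 * pr b h2) (\<Delta> h))) \<and>
     (\<forall>h. pl h 1 = sA (\<epsilon> h) 1) \<and>
     (\<forall>h. pr 1 h = sA (\<epsilon> h) 1)"

definition bicomodule_algebra ::
  "('k::field \<Rightarrow> 'h::ring_1 \<Rightarrow> 'h) \<Rightarrow> ('h \<Rightarrow> ('h \<times> 'h) list) \<Rightarrow> ('h \<Rightarrow> 'k)
   \<Rightarrow> ('k \<Rightarrow> 'a::ring_1 \<Rightarrow> 'a) \<Rightarrow> ('a \<Rightarrow> ('h \<times> 'a) list) \<Rightarrow> ('a \<Rightarrow> ('a \<times> 'h) list) \<Rightarrow> bool" where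
  "bicomodule_algebra sH \<Delta> \<epsilon> sA psl psr \<longleftrightarrow>
     tlinear sA sH sA psl \<and>
     tlinear sA sA sH psr \<and>
     \<comment> \<open>left comodule\<close>
     (\<forall>a. teq3 sH sH sA (tmap_l \<Delta> (psl a)) (tmap_r psl (psl a))) \<and>
     (\<forall>a. sum_list (map (\<lambda>(h, x). sA (\<epsilon> h) x) (psl a)) = a) \<and>
     \<comment> \<open>right comodule\<close>
     (\<forall>a. teq3 sA sH sH (tmap_l psr (psr a)) (tmap_r \<Delta> (psr a))) \<and>
     (\<forall>a. sum_list (map (\<lambda>(x, h). sA (\<epsilon> h) x) (psr a)) = a) \<and>
     \<comment> \<open>bicomodule\<close>
     (\<forall>a. teq3 sH sA sH (tmap_r psr (psl a)) (tmap_l psl (psr a))) \<and>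
     \<comment> \<open>algebra maps\<close>
     (\<forall>a b. teq2 sH sA (psl (a * b)) (tmul (psl a) (psl b))) \<and>
     teq2 sH sA (psl 1) [(1, 1)] \<and>
     (\<forall>a b. teq2 sA sH (psr (a * b)) (tmul (psr a) (psr b))) \<and>
     teq2 sA sH (psr 1) [(1, 1)]"

definition LR_twisting_datum ::
  "('k::field \<Rightarrow> 'h::ring_1 \<Rightarrow> 'h) \<Rightarrow> ('h \<Rightarrow> ('h \<times> 'h) list) \<Rightarrow> ('h \<Rightarrow> 'k)
   \<Rightarrow> ('k \<Rightarrow> 'a::ring_1 \<Rightarrow> 'a) \<Rightarrow> ('h \<Rightarrow> 'a \<Rightarrow> 'a) \<Rightarrow> ('a \<Rightarrow> 'h \<Rightarrow> 'a)
   \<Rightarrow> ('a \<Rightarrow> ('h \<times> 'a) list) \<Rightarrow> ('a \<Rightarrow> ('a \<times> 'h) list) \<Rightarrow> bool" where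
  "LR_twisting_datum sH \<Delta> \<epsilon> sA pl pr psl psr \<longleftrightarrow>
     bialgebra sH \<Delta> \<epsilon> \<and>
     bimodule_algebra sH \<Delta> \<epsilon> sA pl pr \<and>
     bicomodule_algebra sH \<Delta> \<epsilon> sA psl psr \<and>
     (\<forall>h a. teq2 sH sA (psl (pl h a)) (map (\<lambda>(x, y). (x, pl h y)) (psl a))) \<and>
     (\<forall>h a. teq2 sA sH (psr (pl h a)) (map (\<lambda>(x, y). (pl h x, y)) (psr a))) \<and>
     (\<forall>h a. teq2 sH sA (psl (pr a h)) (map (\<lambda>(x, y). (x, pr y h)) (psl a))) \<and>
     (\<forall>h a. teq2 sA sH (psr (pr a h)) (map (\<lambda>(x, y). (pr x h, y)) (psr a)))"

text \<open>The twisted product  a \<bullet> b = (a_[0] . b_<1>)(a_[-1] . b_<0>).\<close>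
definition twisted_mult ::
  "('h \<Rightarrow> 'a::{times,comm_monoid_add} \<Rightarrow> 'a) \<Rightarrow> ('a \<Rightarrow> 'h \<Rightarrow> 'a)
   \<Rightarrow> ('a \<Rightarrow> ('h \<times> 'a) list) \<Rightarrow> ('a \<Rightarrow> ('a \<times> 'h) list) \<Rightarrow> 'a \<Rightarrow> 'a \<Rightarrow> 'a" where
  "twisted_mult pl pr psl psr a b =
     sum_list (map (\<lambda>(am1, a0). sum_list (map (\<lambda>(b0, b1). pr a0 b1 * pl am1 b0) (psr b))) (psl a))"

end

theory Submission
  imports Defs
begin

text \<open>
  Using that the coactions are algebra maps commuting with both actions and that the actions are
  module algebra actions, both \<open>(a \<bullet> b) \<bullet> c\<close> and \<open>a \<bullet> (b \<bullet> c)\<close> expand into one trilinear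
  expression evaluated at three tensors built from \<open>a\<close>, \<open>b\<close> and \<open>c\<close>. The two sides use different
  representatives of these tensors: \<open>(id \<otimes> \<psi>\<^sub>l) \<psi>\<^sub>l a\<close> against \<open>(\<Delta> \<otimes> id) \<psi>\<^sub>l a\<close>,
  \<open>(\<psi>\<^sub>l \<otimes> id) \<psi>\<^sub>r b\<close> against \<open>(id \<otimes> \<psi>\<^sub>r) \<psi>\<^sub>l b\<close>, and \<open>(id \<otimes> \<Delta>) \<psi>\<^sub>r c\<close> against
  \<open>(\<psi>\<^sub>r \<otimes> id) \<psi>\<^sub>r c\<close>, which coincide by coassociativity of the two coactions and the
  bicomodule law. The unit laws follow from \<open>\<psi>(1) = 1 \<otimes> 1\<close>, \<open>h \<cdot> 1 = \<epsilon>(h) 1\<close> and the counit laws.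
\<close>

lemma vector_space_field: "vector_space ((*) :: 'k::field \<Rightarrow> 'k \<Rightarrow> 'k)"
  by unfold_locales (auto simp: algebra_simps)

lemma linear_sum_list:
  assumes "Vector_Spaces.linear s1 s2 f"
  shows "f (sum_list xs) = sum_list (map f xs)"
proof -
  interpret linear s1 s2 f by fact
  show ?thesis by (induction xs) (auto simp: add zero)
qed

lemma linear_compose_fun:
  "Vector_Spaces.linear s1 s2 f \<Longrightarrow> Vector_Spaces.linear s2 s3 g \<Longrightarrow>
   Vector_Spaces.linear s1 s3 (\<lambda>x. g (f x))"
  using Vector_Spaces.linear_compose[of s1 s2 f s3 g] by (simp add: o_def)

lemma linear_sum_list_map:
  assumes "\<And>p. Vector_Spaces.linear s1 s2 (f p)"
  shows "Vector_Spaces.linear s1 s2 (\<lambda>x. sum_list (map (\<lambda>p. f p x) L))"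
proof -
  have vs: "vector_space s1" "vector_space s2"
    using assms[of undefined] by (auto simp: linear_iff)
  show ?thesis
  proof (induction L)
    case Nil
    then show ?case
      using vs by (simp add: linear_iff module.scale_zero_right module_iff_vector_space)
  next
    case (Cons p L)
    interpret f: linear s1 s2 "f p" by (rule assms)
    interpret sum: linear s1 s2 "\<lambda>x. sum_list (map (\<lambda>p. f p x) L)" by (rule Cons)
    show ?case
      unfolding linear_iff using vs
      by (auto simp: f.add sum.add f.scale sum.scale module.scale_right_distrib module_iff_vector_space)
  qed
qed

lemma linear_case_prod:
  "(\<And>y z. Vector_Spaces.linear s1 s2 (f y z)) \<Longrightarrow>
   Vector_Spaces.linear s1 s2 (\<lambda>x. case p of (y, z) \<Rightarrow> f y z x)"
  by (cases p) simp

lemma eq_if_linear_functionals_eq: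
  fixes s :: "'k::field \<Rightarrow> 'a::ab_group_add \<Rightarrow> 'a"
  assumes vs: "vector_space s"
    and eq: "\<And>\<phi>. Vector_Spaces.linear s (*) \<phi> \<Longrightarrow> \<phi> x = \<phi> y"
  shows "x = y"
proof (rule ccontr)
  assume "x \<noteq> y"
  interpret vector_space_pair s "(*)"
    using vs vector_space_field by (simp add: vector_space_pair_def)
  have "vs1.independent {x - y}"
    using \<open>x \<noteq> y\<close> vs1.independent_insertI[of "x - y" "{}"] by (simp add: vs1.span_empty)
  then obtain \<phi> where \<phi>: "Vector_Spaces.linear s (*) \<phi>" "\<phi> (x - y) = 1"
    using linear_independent_extend[of "{x - y}" "\<lambda>_. 1"] by auto
  interpret linear s "(*)" \<phi> by fact
  have "\<phi> x = \<phi> y" using eq \<phi>(1) .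
  then have "\<phi> (x - y) = 0" by (simp add: diff)
  with \<phi>(2) show False by simp
qed

definition bilinear_map ::
  "('k::field \<Rightarrow> 'v::ab_group_add \<Rightarrow> 'v) \<Rightarrow> ('k \<Rightarrow> 'w::ab_group_add \<Rightarrow> 'w)
   \<Rightarrow> ('k \<Rightarrow> 'a::ab_group_add \<Rightarrow> 'a) \<Rightarrow> ('v \<Rightarrow> 'w \<Rightarrow> 'a) \<Rightarrow> bool" where
  "bilinear_map sV sW sA F \<longleftrightarrow>
     (\<forall>v. Vector_Spaces.linear sW sA (F v)) \<and> (\<forall>w. Vector_Spaces.linear sV sA (\<lambda>v. F v w))"

definition trilinear_map ::
  "('k::field \<Rightarrow> 'u::ab_group_add \<Rightarrow> 'u) \<Rightarrow> ('k \<Rightarrow> 'v::ab_group_add \<Rightarrow> 'v)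
   \<Rightarrow> ('k \<Rightarrow> 'w::ab_group_add \<Rightarrow> 'w) \<Rightarrow> ('k \<Rightarrow> 'a::ab_group_add \<Rightarrow> 'a)
   \<Rightarrow> ('u \<Rightarrow> 'v \<Rightarrow> 'w \<Rightarrow> 'a) \<Rightarrow> bool" where
  "trilinear_map sU sV sW sA F \<longleftrightarrow>
     (\<forall>v w. Vector_Spaces.linear sU sA (\<lambda>u. F u v w)) \<and>
     (\<forall>u w. Vector_Spaces.linear sV sA (\<lambda>v. F u v w)) \<and>
     (\<forall>u v. Vector_Spaces.linear sW sA (\<lambda>w. F u v w))"

lemma bilinear_mapI:
  "(\<And>v. Vector_Spaces.linear sW sA (\<lambda>w. F v w)) \<Longrightarrow> (\<And>w. Vector_Spaces.linear sV sA (\<lambda>v. F v w))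
   \<Longrightarrow> bilinear_map sV sW sA F"
  unfolding bilinear_map_def by auto

lemma trilinear_mapI:
  "(\<And>v w. Vector_Spaces.linear sU sA (\<lambda>u. F u v w)) \<Longrightarrow> (\<And>u w. Vector_Spaces.linear sV sA (\<lambda>v. F u v w))
   \<Longrightarrow> (\<And>u v. Vector_Spaces.linear sW sA (\<lambda>w. F u v w)) \<Longrightarrow> trilinear_map sU sV sW sA F"
  unfolding trilinear_map_def by auto

text \<open>
  Tensor equality is defined by testing against scalar multilinear forms only; composing with
  linear functionals, which separate points over a field, extends it to vector-valued maps.
\<close>

lemma teq2_sum_list_eq:
  assumes "teq2 sV sW xs ys" "bilinear_map sV sW sA F" "vector_space sA"
  shows "sum_list (map (\<lambda>(v, w). F v w) xs) = sum_list (map (\<lambda>(v, w). F v w) ys)"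
proof (rule eq_if_linear_functionals_eq[OF assms(3)])
  fix \<phi> assume \<phi>: "Vector_Spaces.linear sA (*) \<phi>"
  have "bilin sV sW (\<lambda>v w. \<phi> (F v w))"
    using assms(2) \<phi> unfolding bilin_def bilinear_map_def by (auto intro: linear_compose_fun)
  then have "sum_list (map (\<lambda>(v, w). \<phi> (F v w)) xs) = sum_list (map (\<lambda>(v, w). \<phi> (F v w)) ys)"
    using assms(1) unfolding teq2_def by blast
  then show "\<phi> (sum_list (map (\<lambda>(v, w). F v w) xs)) = \<phi> (sum_list (map (\<lambda>(v, w). F v w) ys))"
    by (simp add: linear_sum_list[OF \<phi>] o_def case_prod_unfold)
qed

lemma teq3_sum_list_eq:
  assumes "teq3 sU sV sW xs ys" "trilinear_map sU sV sW sA F" "vector_space sA"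
  shows "sum_list (map (\<lambda>(u, v, w). F u v w) xs) = sum_list (map (\<lambda>(u, v, w). F u v w) ys)"
proof (rule eq_if_linear_functionals_eq[OF assms(3)])
  fix \<phi> assume \<phi>: "Vector_Spaces.linear sA (*) \<phi>"
  have "trilin sU sV sW (\<lambda>u v w. \<phi> (F u v w))"
    using assms(2) \<phi> unfolding trilin_def trilinear_map_def by (auto intro!: linear_compose_fun[OF _ \<phi>])
  then have "sum_list (map (\<lambda>(u, v, w). \<phi> (F u v w)) xs) = sum_list (map (\<lambda>(u, v, w). \<phi> (F u v w)) ys)"
    using assms(1) unfolding teq3_def by blast
  then show "\<phi> (sum_list (map (\<lambda>(u, v, w). F u v w) xs)) = \<phi> (sum_list (map (\<lambda>(u, v, w). F u v w) ys))"
    by (simp add: linear_sum_list[OF \<phi>] o_def case_prod_unfold)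
qed

lemma tlinear_sum_list_linear:
  assumes f: "tlinear sX sV sW f" and F: "bilinear_map sV sW sA F"
    and vs: "vector_space sX" "vector_space sA"
  shows "Vector_Spaces.linear sX sA (\<lambda>x. sum_list (map (\<lambda>(v, w). F v w) (f x)))"
  unfolding linear_iff
proof (intro conjI allI vs)
  fix x y
  show "sum_list (map (\<lambda>(v, w). F v w) (f (x + y))) =
        sum_list (map (\<lambda>(v, w). F v w) (f x)) + sum_list (map (\<lambda>(v, w). F v w) (f y))"
    using teq2_sum_list_eq[OF _ F vs(2), of "f (x + y)" "f x @ f y"] f unfolding tlinear_def by simp
next
  fix c x
  have F_scale: "F (sV c v) w = sA c (F v w)" for v w
    using F unfolding bilinear_map_def linear_iff by blast
  have "sum_list (map (\<lambda>(v, w). F v w) (f (sX c x))) =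
        sum_list (map (\<lambda>(v, w). F v w) (map (\<lambda>(v, w). (sV c v, w)) (f x)))"
    using teq2_sum_list_eq[OF _ F vs(2)] f unfolding tlinear_def by blast
  also have "\<dots> = sA c (sum_list (map (\<lambda>(v, w). F v w) (f x)))"
    by (simp add: F_scale linear_sum_list[OF vector_space.linear_scale_self[OF vs(2)]] o_def case_prod_unfold)
  finally show "sum_list (map (\<lambda>(v, w). F v w) (f (sX c x))) = sA c (sum_list (map (\<lambda>(v, w). F v w) (f x)))" .
qed

lemma k_algebra_vector_space: "k_algebra s \<Longrightarrow> vector_space s"
  unfolding k_algebra_def by auto

lemma k_algebra_linear_id: "k_algebra s \<Longrightarrow> Vector_Spaces.linear s s (\<lambda>x. x)"
  using vector_space.linear_id[OF k_algebra_vector_space] by (simp add: id_def)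

lemma k_algebra_linear_mult:
  assumes "k_algebra s" "Vector_Spaces.linear s' s g"
  shows "Vector_Spaces.linear s' s (\<lambda>x. u * g x)" "Vector_Spaces.linear s' s (\<lambda>x. g x * u)"
proof -
  have "Vector_Spaces.linear s s (\<lambda>x. u * x)" "Vector_Spaces.linear s s (\<lambda>x. x * u)"
    using assms(1) unfolding k_algebra_def linear_iff by (auto simp: algebra_simps, metis+)
  then show "Vector_Spaces.linear s' s (\<lambda>x. u * g x)" "Vector_Spaces.linear s' s (\<lambda>x. g x * u)"
    using linear_compose_fun[OF assms(2)] by auto
qed

lemma k_algebra_scale_1_mult:
  assumes "k_algebra s"
  shows "s c 1 * y = s c y" "y * s c 1 = s c y"
  using assms unfolding k_algebra_def by (metis mult_1_left, metis mult_1_right)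

lemma sum_list_concat: "sum_list (concat xss) = sum_list (map sum_list xss)"
  by (induction xss) auto

lemma sum_list_map_swap:
  fixes f :: "'a \<Rightarrow> 'b \<Rightarrow> 'c::comm_monoid_add"
  shows "sum_list (map (\<lambda>x. sum_list (map (\<lambda>y. f x y) ys)) xs) =
         sum_list (map (\<lambda>y. sum_list (map (\<lambda>x. f x y) xs)) ys)"
  by (induction xs) (auto simp: sum_list_addf)

lemma sum_list_map_prod_swap:
  fixes g :: "'a \<Rightarrow> 'b \<Rightarrow> 'c \<Rightarrow> 'd \<Rightarrow> 'e::comm_monoid_add"
  assumes "\<And>x1 x2. f x1 x2 = sum_list (map (\<lambda>(y1, y2). g x1 x2 y1 y2) ys)"
  shows "sum_list (map (\<lambda>(x1, x2). f x1 x2) xs) =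
         sum_list (map (\<lambda>(y1, y2). sum_list (map (\<lambda>(x1, x2). g x1 x2 y1 y2) xs)) ys)"
  using sum_list_map_swap[of "\<lambda>x y. g (fst x) (snd x) (fst y) (snd y)" ys xs]
  by (simp add: assms case_prod_unfold)

lemma sum_list_tmul:
  "sum_list (map (\<lambda>(v, w). F v w) (tmul xs ys)) =
   sum_list (map (\<lambda>(x, y). sum_list (map (\<lambda>(x', y'). F (x * x') (y * y')) ys)) xs)"
  unfolding tmul_def by (simp add: map_concat sum_list_concat o_def case_prod_unfold)

lemma sum_list_tmap_l:
  "sum_list (map (\<lambda>(u, v, w). F u v w) (tmap_l f xs)) =
   sum_list (map (\<lambda>(x, y). sum_list (map (\<lambda>(x1, x2). F x1 x2 y) (f x))) xs)"
  unfolding tmap_l_def by (simp add: map_concat sum_list_concat o_def case_prod_unfold)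

lemma sum_list_tmap_r:
  "sum_list (map (\<lambda>(u, v, w). F u v w) (tmap_r f xs)) =
   sum_list (map (\<lambda>(x, y). sum_list (map (\<lambda>(y1, y2). F x y1 y2) (f y))) xs)"
  unfolding tmap_r_def by (simp add: map_concat sum_list_concat o_def case_prod_unfold)

text \<open>
  The parts of an L-R-twisting datum that the proof uses: of the bialgebra axioms on \<open>H\<close> only its
  algebra structure is needed.
\<close>

locale LR_twisting =
  fixes sH :: "'k::field \<Rightarrow> 'h::ring_1 \<Rightarrow> 'h"
    and \<Delta> :: "'h \<Rightarrow> ('h \<times> 'h) list"
    and \<epsilon> :: "'h \<Rightarrow> 'k"
    and sA :: "'k \<Rightarrow> 'a::ring_1 \<Rightarrow> 'a"
    and pl :: "'h \<Rightarrow> 'a \<Rightarrow> 'a"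
    and pr :: "'a \<Rightarrow> 'h \<Rightarrow> 'a"
    and psl :: "'a \<Rightarrow> ('h \<times> 'a) list"
    and psr :: "'a \<Rightarrow> ('a \<times> 'h) list"
  assumes algebra_A: "k_algebra sA"
    and algebra_H: "k_algebra sH"
    and pl_linear: "\<And>h. Vector_Spaces.linear sA sA (pl h)"
    and pl_linear_in_H: "\<And>a. Vector_Spaces.linear sH sA (\<lambda>h. pl h a)"
    and pr_linear: "\<And>h. Vector_Spaces.linear sA sA (\<lambda>a. pr a h)"
    and pr_linear_in_H: "\<And>a. Vector_Spaces.linear sH sA (pr a)"
    and pl_assoc: "\<And>g h a. pl (g * h) a = pl g (pl h a)"
    and pl_1: "\<And>a. pl 1 a = a"
    and pr_assoc: "\<And>g h a. pr a (g * h) = pr (pr a g) h"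
    and pr_1: "\<And>a. pr a 1 = a"
    and pr_pl_commute: "\<And>g h a. pr (pl h a) g = pl h (pr a g)"
    and pl_mult: "\<And>h a b. pl h (a * b) = sum_list (map (\<lambda>(h1, h2). pl h1 a * pl h2 b) (\<Delta> h))"
    and pr_mult: "\<And>h a b. pr (a * b) h = sum_list (map (\<lambda>(h1, h2). pr a h1 * pr b h2) (\<Delta> h))"
    and pl_unit: "\<And>h. pl h 1 = sA (\<epsilon> h) 1"
    and pr_unit: "\<And>h. pr 1 h = sA (\<epsilon> h) 1"
    and psl_tlinear: "tlinear sA sH sA psl"
    and psr_tlinear: "tlinear sA sA sH psr"
    and psl_coassoc: "\<And>a. teq3 sH sH sA (tmap_l \<Delta> (psl a)) (tmap_r psl (psl a))"
    and psl_counit: "\<And>a. sum_list (map (\<lambda>(h, x). sA (\<epsilon> h) x) (psl a)) = a"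
    and psr_coassoc: "\<And>a. teq3 sA sH sH (tmap_l psr (psr a)) (tmap_r \<Delta> (psr a))"
    and psr_counit: "\<And>a. sum_list (map (\<lambda>(x, h). sA (\<epsilon> h) x) (psr a)) = a"
    and bicomodule: "\<And>a. teq3 sH sA sH (tmap_r psr (psl a)) (tmap_l psl (psr a))"
    and psl_mult: "\<And>a b. teq2 sH sA (psl (a * b)) (tmul (psl a) (psl b))"
    and psl_1: "teq2 sH sA (psl 1) [(1, 1)]"
    and psr_mult: "\<And>a b. teq2 sA sH (psr (a * b)) (tmul (psr a) (psr b))"
    and psr_1: "teq2 sA sH (psr 1) [(1, 1)]"
    and psl_pl: "\<And>h a. teq2 sH sA (psl (pl h a)) (map (\<lambda>(x, y). (x, pl h y)) (psl a))"
    and psr_pl: "\<And>h a. teq2 sA sH (psr (pl h a)) (map (\<lambda>(x, y). (pl h x, y)) (psr a))"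
    and psl_pr: "\<And>h a. teq2 sH sA (psl (pr a h)) (map (\<lambda>(x, y). (x, pr y h)) (psl a))"
    and psr_pr: "\<And>h a. teq2 sA sH (psr (pr a h)) (map (\<lambda>(x, y). (pr x h, y)) (psr a))"
begin

lemma vector_space_A: "vector_space sA"
  using k_algebra_vector_space[OF algebra_A] .

lemma linear_pl: "Vector_Spaces.linear s sA g \<Longrightarrow> Vector_Spaces.linear s sA (\<lambda>x. pl h (g x))"
  using linear_compose_fun pl_linear by blast

lemma linear_pl_in_H: "Vector_Spaces.linear s sH g \<Longrightarrow> Vector_Spaces.linear s sA (\<lambda>x. pl (g x) a)"
  using linear_compose_fun pl_linear_in_H by blast

lemma linear_pr: "Vector_Spaces.linear s sA g \<Longrightarrow> Vector_Spaces.linear s sA (\<lambda>x. pr (g x) h)"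
  using linear_compose_fun pr_linear by blast

lemma linear_pr_in_H: "Vector_Spaces.linear s sH g \<Longrightarrow> Vector_Spaces.linear s sA (\<lambda>x. pr a (g x))"
  using linear_compose_fun pr_linear_in_H by blast

lemmas linear_rules = k_algebra_linear_id[OF algebra_A] k_algebra_linear_id[OF algebra_H]
  k_algebra_linear_mult[OF algebra_A] k_algebra_linear_mult[OF algebra_H]
  linear_pl linear_pl_in_H linear_pr linear_pr_in_H linear_sum_list_map linear_case_prod

abbreviation bullet :: "'a \<Rightarrow> 'a \<Rightarrow> 'a" where
  "bullet \<equiv> twisted_mult pl pr psl psr"

lemma linear_sum_psl:
  "bilinear_map sH sA sA F \<Longrightarrow> Vector_Spaces.linear sA sA (\<lambda>a. sum_list (map (\<lambda>(h, x). F h x) (psl a)))"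
  using tlinear_sum_list_linear[OF psl_tlinear _ vector_space_A vector_space_A] .

lemma linear_sum_psr:
  "bilinear_map sA sH sA F \<Longrightarrow> Vector_Spaces.linear sA sA (\<lambda>a. sum_list (map (\<lambda>(x, h). F x h) (psr a)))"
  using tlinear_sum_list_linear[OF psr_tlinear _ vector_space_A vector_space_A] .

context
  fixes F :: "'h \<Rightarrow> 'a \<Rightarrow> 'a"
  assumes F: "bilinear_map sH sA sA F"
begin

lemma sum_psl_sum:
  "sum_list (map (\<lambda>(g, x). F g x) (psl (sum_list (map (\<lambda>(u, v). T u v) L)))) =
   sum_list (map (\<lambda>(u, v). sum_list (map (\<lambda>(g, x). F g x) (psl (T u v)))) L)"
  using linear_sum_list[OF linear_sum_psl[OF F], of "map (\<lambda>(u, v). T u v) L"]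
  by (simp add: o_def case_prod_unfold)

lemma sum_psl_mult:
  "sum_list (map (\<lambda>(g, x). F g x) (psl (a * b))) =
   sum_list (map (\<lambda>(g1, x1). sum_list (map (\<lambda>(g2, x2). F (g1 * g2) (x1 * x2)) (psl b))) (psl a))"
  using teq2_sum_list_eq[OF psl_mult F vector_space_A] by (simp add: sum_list_tmul)

lemma sum_psl_1: "sum_list (map (\<lambda>(g, x). F g x) (psl 1)) = F 1 1"
  using teq2_sum_list_eq[OF psl_1 F vector_space_A] by simp

lemma sum_psl_pl:
  "sum_list (map (\<lambda>(g, x). F g x) (psl (pl h a))) = sum_list (map (\<lambda>(g, x). F g (pl h x)) (psl a))"
  using teq2_sum_list_eq[OF psl_pl F vector_space_A] by (simp add: o_def case_prod_unfold)

lemma sum_psl_pr: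
  "sum_list (map (\<lambda>(g, x). F g x) (psl (pr a h))) = sum_list (map (\<lambda>(g, x). F g (pr x h)) (psl a))"
  using teq2_sum_list_eq[OF psl_pr F vector_space_A] by (simp add: o_def case_prod_unfold)

end

context
  fixes F :: "'a \<Rightarrow> 'h \<Rightarrow> 'a"
  assumes F: "bilinear_map sA sH sA F"
begin

lemma sum_psr_sum:
  "sum_list (map (\<lambda>(x, k). F x k) (psr (sum_list (map (\<lambda>(u, v). T u v) L)))) =
   sum_list (map (\<lambda>(u, v). sum_list (map (\<lambda>(x, k). F x k) (psr (T u v)))) L)"
  using linear_sum_list[OF linear_sum_psr[OF F], of "map (\<lambda>(u, v). T u v) L"]
  by (simp add: o_def case_prod_unfold)

lemma sum_psr_mult:
  "sum_list (map (\<lambda>(x, k). F x k) (psr (a * b))) =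
   sum_list (map (\<lambda>(x1, k1). sum_list (map (\<lambda>(x2, k2). F (x1 * x2) (k1 * k2)) (psr b))) (psr a))"
  using teq2_sum_list_eq[OF psr_mult F vector_space_A] by (simp add: sum_list_tmul)

lemma sum_psr_1: "sum_list (map (\<lambda>(x, k). F x k) (psr 1)) = F 1 1"
  using teq2_sum_list_eq[OF psr_1 F vector_space_A] by simp

lemma sum_psr_pl:
  "sum_list (map (\<lambda>(x, k). F x k) (psr (pl h a))) = sum_list (map (\<lambda>(x, k). F (pl h x) k) (psr a))"
  using teq2_sum_list_eq[OF psr_pl F vector_space_A] by (simp add: o_def case_prod_unfold)

lemma sum_psr_pr:
  "sum_list (map (\<lambda>(x, k). F x k) (psr (pr a h))) = sum_list (map (\<lambda>(x, k). F (pr x h) k) (psr a))"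
  using teq2_sum_list_eq[OF psr_pr F vector_space_A] by (simp add: o_def case_prod_unfold)

end

lemma bullet_1_left: "bullet 1 a = a"
proof -
  have "bullet 1 a = sum_list (map (\<lambda>(x, k). pr 1 k * pl 1 x) (psr a))"
    unfolding twisted_mult_def by (rule sum_psl_1) (intro bilinear_mapI linear_rules)
  also have "\<dots> = sum_list (map (\<lambda>(x, k). sA (\<epsilon> k) x) (psr a))"
    by (simp add: pl_1 pr_unit k_algebra_scale_1_mult[OF algebra_A])
  finally show ?thesis by (simp add: psr_counit)
qed

lemma bullet_1_right: "bullet a 1 = a"
proof -
  have "bullet a 1 = sum_list (map (\<lambda>(h, x). pr x 1 * pl h 1) (psl a))"
    unfolding twisted_mult_def
    by (intro arg_cong[where f=sum_list] map_cong refl, clarify, rule sum_psr_1)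
      (intro bilinear_mapI linear_rules)
  also have "\<dots> = sum_list (map (\<lambda>(h, x). sA (\<epsilon> h) x) (psl a))"
    by (simp add: pr_1 pl_unit k_algebra_scale_1_mult[OF algebra_A])
  finally show ?thesis by (simp add: psl_counit)
qed

lemma linear_bullet_left: "Vector_Spaces.linear sA sA (\<lambda>a. bullet a b)"
  unfolding twisted_mult_def by (rule linear_sum_psl) (intro bilinear_mapI linear_rules)

lemma linear_bullet_right: "Vector_Spaces.linear sA sA (bullet a)"
proof -
  have "Vector_Spaces.linear sA sA (\<lambda>b. sum_list (map (\<lambda>(x, k). pr a0 k * pl h x) (psr b)))" for h a0
    by (rule linear_sum_psr) (intro bilinear_mapI linear_rules)
  then show ?thesis
    unfolding twisted_mult_def by (intro linear_sum_list_map linear_case_prod)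
qed

text \<open>
  The common expansion of both bracketings of a triple product; the arguments stand for tensors
  in \<open>H \<otimes> H \<otimes> A\<close>, \<open>H \<otimes> A \<otimes> H\<close> and \<open>A \<otimes> H \<otimes> H\<close> coming from the three factors.
\<close>

definition twisted_triple :: "('h \<times> 'h \<times> 'a) list \<Rightarrow> ('h \<times> 'a \<times> 'h) list \<Rightarrow> ('a \<times> 'h \<times> 'h) list \<Rightarrow> 'a" where
  "twisted_triple X Y Z =
     sum_list (map (\<lambda>(h1, h2, a0). sum_list (map (\<lambda>(g, b00, k1). sum_list (map (\<lambda>(c00, k2, c1).
       pr a0 (k1 * k2) * pl h1 (pr b00 c1) * pl h2 (pl g c00)) Z)) Y)) X)"

lemma twisted_triple_teq3_left: "teq3 sH sH sA X X' \<Longrightarrow> twisted_triple X Y Z = twisted_triple X' Y Z"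
  unfolding twisted_triple_def
  by (erule teq3_sum_list_eq[OF _ _ vector_space_A]) (intro trilinear_mapI linear_rules)

lemma twisted_triple_teq3_middle: "teq3 sH sA sH Y Y' \<Longrightarrow> twisted_triple X Y Z = twisted_triple X Y' Z"
  unfolding twisted_triple_def
  by (intro arg_cong[where f=sum_list] map_cong refl, clarify,
      erule teq3_sum_list_eq[OF _ _ vector_space_A]) (intro trilinear_mapI linear_rules)

lemma twisted_triple_teq3_right:
  assumes Z: "teq3 sA sH sH Z Z'"
  shows "twisted_triple X Y Z = twisted_triple X Y Z'"
proof -
  have "sum_list (map (\<lambda>(c00, k2, c1). pr a0 (k1 * k2) * pl h1 (pr b00 c1) * pl h2 (pl g c00)) Z) =
        sum_list (map (\<lambda>(c00, k2, c1). pr a0 (k1 * k2) * pl h1 (pr b00 c1) * pl h2 (pl g c00)) Z')"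
    for h1 h2 a0 g b00 k1
    by (rule teq3_sum_list_eq[OF Z _ vector_space_A]) (intro trilinear_mapI linear_rules)
  then show ?thesis
    unfolding twisted_triple_def by simp
qed

lemma bullet_bullet_left:
  "bullet (bullet a b) c = twisted_triple (tmap_r psl (psl a)) (tmap_l psl (psr b)) (tmap_r \<Delta> (psr c))"
proof -
  have "bullet (bullet a b) c = sum_list (map (\<lambda>(h, a0). sum_list (map (\<lambda>(b0, b1).
    sum_list (map (\<lambda>(g1, a00). sum_list (map (\<lambda>(g2, b00). sum_list (map (\<lambda>(y, k).
      pr (pr a00 b1 * pl h b00) k * pl (g1 * g2) y) (psr c))) (psl b0))) (psl a0))) (psr b))) (psl a))"
    unfolding twisted_mult_def
    by (simp add: sum_psl_sum sum_psl_mult sum_psl_pr sum_psl_pl bilinear_map_def linear_rules)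
  also have "\<dots> = sum_list (map (\<lambda>(h, a0). sum_list (map (\<lambda>(b0, b1).
    sum_list (map (\<lambda>(g1, a00). sum_list (map (\<lambda>(g2, b00). sum_list (map (\<lambda>(y, k).
      sum_list (map (\<lambda>(k1, k2). pr a00 (b1 * k1) * pl h (pr b00 k2) * pl g1 (pl g2 y)) (\<Delta> k)))
      (psr c))) (psl b0))) (psl a0))) (psr b))) (psl a))"
    by (simp add: pr_mult pl_assoc pr_assoc[symmetric] pr_pl_commute sum_list_mult_const[symmetric]
        case_prod_unfold)
  also have "\<dots> = sum_list (map (\<lambda>(h, a0). sum_list (map (\<lambda>(g1, a00).
    sum_list (map (\<lambda>(b0, b1). sum_list (map (\<lambda>(g2, b00). sum_list (map (\<lambda>(y, k).
      sum_list (map (\<lambda>(k1, k2). pr a00 (b1 * k1) * pl h (pr b00 k2) * pl g1 (pl g2 y)) (\<Delta> k)))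
      (psr c))) (psl b0))) (psr b))) (psl a0))) (psl a))"
    by (intro arg_cong[where f=sum_list] map_cong refl, clarify, rule sum_list_map_prod_swap, rule refl)
  also have "\<dots> = twisted_triple (tmap_r psl (psl a)) (tmap_l psl (psr b)) (tmap_r \<Delta> (psr c))"
    by (simp add: twisted_triple_def sum_list_tmap_l sum_list_tmap_r)
  finally show ?thesis .
qed

lemma sum_psr_bullet:
  "sum_list (map (\<lambda>(x, k). pr a0 k * pl h x) (psr (bullet b c))) =
   sum_list (map (\<lambda>(h1, h2). sum_list (map (\<lambda>(g, b0). sum_list (map (\<lambda>(b00, k1).
     sum_list (map (\<lambda>(c0, c1). sum_list (map (\<lambda>(c00, k2).
       pr a0 (k1 * k2) * pl h1 (pr b00 c1) * pl h2 (pl g c00)) (psr c0))) (psr c))) (psr b0))) (psl b))) (\<Delta> h))"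
proof -
  have "sum_list (map (\<lambda>(x, k). pr a0 k * pl h x) (psr (bullet b c))) =
    sum_list (map (\<lambda>(g, b0). sum_list (map (\<lambda>(c0, c1). sum_list (map (\<lambda>(b00, k1).
      sum_list (map (\<lambda>(c00, k2).
      pr a0 (k1 * k2) * pl h (pr b00 c1 * pl g c00)) (psr c0))) (psr b0))) (psr c))) (psl b))"
    unfolding twisted_mult_def
    by (simp add: sum_psr_sum sum_psr_mult sum_psr_pr sum_psr_pl bilinear_map_def linear_rules)
  also have "\<dots> = sum_list (map (\<lambda>(g, b0). sum_list (map (\<lambda>(c0, c1). sum_list (map (\<lambda>(b00, k1).
      sum_list (map (\<lambda>(c00, k2). sum_list (map (\<lambda>(h1, h2).
      pr a0 (k1 * k2) * pl h1 (pr b00 c1) * pl h2 (pl g c00)) (\<Delta> h))) (psr c0))) (psr b0))) (psr c))) (psl b))"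
    by (simp add: pl_mult sum_list_const_mult[symmetric] mult.assoc case_prod_unfold)
  also have "\<dots> = sum_list (map (\<lambda>(g, b0). sum_list (map (\<lambda>(b00, k1). sum_list (map (\<lambda>(c0, c1).
      sum_list (map (\<lambda>(c00, k2). sum_list (map (\<lambda>(h1, h2).
      pr a0 (k1 * k2) * pl h1 (pr b00 c1) * pl h2 (pl g c00)) (\<Delta> h))) (psr c0))) (psr c))) (psr b0))) (psl b))"
    by (intro arg_cong[where f=sum_list] map_cong refl, clarify, rule sum_list_map_prod_swap, rule refl)
  also have "\<dots> = sum_list (map (\<lambda>(h1, h2). sum_list (map (\<lambda>(g, b0). sum_list (map (\<lambda>(b00, k1).
    sum_list (map (\<lambda>(c0, c1). sum_list (map (\<lambda>(c00, k2).
      pr a0 (k1 * k2) * pl h1 (pr b00 c1) * pl h2 (pl g c00)) (psr c0))) (psr c))) (psr b0))) (psl b))) (\<Delta> h))"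
    by (intro sum_list_map_prod_swap) (rule refl)
  finally show ?thesis .
qed

lemma bullet_bullet_right:
  "bullet a (bullet b c) = twisted_triple (tmap_l \<Delta> (psl a)) (tmap_r psr (psl b)) (tmap_l psr (psr c))"
  unfolding twisted_mult_def[of _ _ _ _ a] sum_psr_bullet
  by (simp add: twisted_triple_def sum_list_tmap_l sum_list_tmap_r)

lemma bullet_assoc: "bullet (bullet a b) c = bullet a (bullet b c)"
  unfolding bullet_bullet_left bullet_bullet_right
  using twisted_triple_teq3_left[OF psl_coassoc] twisted_triple_teq3_middle[OF bicomodule]
    twisted_triple_teq3_right[OF psr_coassoc] by simp

end

theorem proposition4p2:
  fixes sH :: "'k::field \<Rightarrow> 'h::ring_1 \<Rightarrow> 'h"
    and \<Delta> :: "'h \<Rightarrow> ('h \<times> 'h) list"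
    and \<epsilon> :: "'h \<Rightarrow> 'k"
    and sA :: "'k \<Rightarrow> 'a::ring_1 \<Rightarrow> 'a"
    and pl :: "'h \<Rightarrow> 'a \<Rightarrow> 'a"
    and pr :: "'a \<Rightarrow> 'h \<Rightarrow> 'a"
    and psl :: "'a \<Rightarrow> ('h \<times> 'a) list"
    and psr :: "'a \<Rightarrow> ('a \<times> 'h) list"
  assumes "k_algebra sA"
    and "LR_twisting_datum sH \<Delta> \<epsilon> sA pl pr psl psr"
  defines "bullet \<equiv> twisted_mult pl pr psl psr"
  shows "(\<forall>a b c. bullet (bullet a b) c = bullet a (bullet b c)) \<and>
         (\<forall>a. bullet 1 a = a \<and> bullet a 1 = a) \<and>
         (\<forall>a a' b. bullet (a + a') b = bullet a b + bullet a' b) \<and>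
         (\<forall>a b b'. bullet a (b + b') = bullet a b + bullet a b') \<and>
         (\<forall>c a b. bullet (sA c a) b = sA c (bullet a b) \<and> bullet a (sA c b) = sA c (bullet a b))"
proof -
  interpret LR_twisting sH \<Delta> \<epsilon> sA pl pr psl psr
    using assms(1,2) unfolding LR_twisting_def LR_twisting_datum_def bialgebra_def
      bimodule_algebra_def bicomodule_algebra_def by auto
  show ?thesis
    unfolding bullet_def
    using bullet_assoc bullet_1_left bullet_1_right linear_bullet_left linear_bullet_right
    unfolding linear_iff by auto
qed

end
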